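(* Dynamic A* with \texttt{reeval} set to true and using a dyn-monotonic, dyn-consistent dynamic heuristic never reopens a state, i.e., it never removes a state from Closed.
   Context: A transition system is $\mathcal T=\langle S,L,c,T,s_I,S_G\rangle$ with finite states $S$, finite labels $L$, cost function $c:L\to\mathbb R_{\ge0}$, transitions $T\subseteq S\times L\times S$, initial state $s_I$, goal states $S_G\subseteq S$. An information source $\sigma$ consists of a set $\mathcal I_\sigma$, $\iota_0^\sigma\in\mathcal I_\sigma$, $\mathrm{update}_\sigma:\mathcal I_\sigma\times T\to\mathcal I_\sigma$, $\mathrm{refine}_\sigma:\mathcal I_\sigma\times S\to\mathcal I_\sigma$. Reachable information: $\iota_n$ is reachable if obtained from $\iota_0^\sigma$ by a sequence of refine steps on states and update steps on transitions $e_1,\dots,e_n$, where each refined state and each origin of an updated transition is $s_I$ or the target of an earlier updated transition. A dynamic heuristic over $\sigma$ is $h:S\times\mathcal I_\sigma\to\mathbb R_{\ge0}\cup\{\infty\}$. It is dyn-consistent if $h(s,\iota)\le c(\ell)+h(s',\iota)$ for all $\langle s,\ell,s'\rangle\in T$ and all reachable $\iota$; and dyn-monotonic if $h(s,\iota)\le h(s,\mathrm{update}_\sigma(\iota,t))$ and $h(s,\iota)\le h(s,\mathrm{refine}_\sigma(\iota,s'))$ for all reachable $\iota$, all $s,s'\in S$, all $t\in T$. Parent source $\sigma_p$: $\mathcal I_{\sigma_p}$ = partial functions $S\rightharpoonup\mathbb R_{\ge0}\times(T\cup\{\bot\})$; $\iota_0=\{s_I\mapsto\langle0,\bot\rangle\}$;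 refine is the identity; $\mathrm{update}(\iota,\langle s,\ell,s'\rangle)$ with $\iota(s)=\langle g,\cdot\rangle$ changes only $s'$, setting it to $\langle g+c(\ell),\langle s,\ell,s'\rangle\rangle$ if $\iota(s')$ is undefined or has $g$-component $\ge g+c(\ell)$, otherwise unchanged. Dynamic A* takes $\mathcal T$, sources $\sigma_p,\sigma_h$, a dynamic heuristic $h$ over $\sigma_h$ and a Boolean flag \texttt{reeval}. Notation: at any moment $g(s)$ is the $g$-component of the current $\mathcal I(\sigma_p)(s)$ and $h(s)$ denotes $h(s,\mathcal I(\sigma_h))$ for the current $\mathcal I(\sigma_h)$. Open is a priority queue of entries $\langle s,g,h\rangle$ (duplicates allowed), popped by minimal stored value $g+h$ (ties arbitrary). Algorithm: 1. $\mathcal I(\sigma):=\iota_0^\sigma$ for both sources; $S_{\mathrm{known}}:=\{s_I\}$; Closed $:=\emptyset$; Open empty. If $h(s_I)<\infty$ insert $\langle s_I,g(s_I),h(s_I)\rangle$. 2. While Open is nonempty: pop an entry $\langle s,\hat g,\hat h\rangle$ of minimal $\hat g+\hat h$. If $s\in$ Closed, continue with the next iteration. Otherwise set $\mathcal I(\sigma):=\mathrm{refine}_\sigma(\mathcal I(\sigma),s)$ for both sources. If \texttt{reeval} is true and $\hat h<h(s)$: if $h(s)<\infty$ insert $\langle s,g(s),h(s)\rangle$; continue with the next iteration (this is a re-evaluation). Otherwise add $s$ to Closed ($s$ is expanded). If $s\in S_G$, return the path obtained by following the parent pointers of $\mathcal I(\sigma_p)$ from $s$ back to $s_I$. Otherwise,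 for each $t=\langle s,\ell,s'\rangle\in T$ in some order: let $old:=g(s')$ if $s'\in S_{\mathrm{known}}$ and undefined otherwise; set $\mathcal I(\sigma):=\mathrm{update}_\sigma(\mathcal I(\sigma),t)$ for both sources; add $s'$ to $S_{\mathrm{known}}$; if $h(s')=\infty$ skip $s'$; else if $old$ is undefined insert $\langle s',g(s'),h(s')\rangle$; else if $old>g(s')$, remove $s'$ from Closed if it is there (reopening) and insert $\langle s',g(s'),h(s')\rangle$. 3. Return "unsolvable". *)

theory Defs
  imports Main "HOL-Library.Extended_Real" "HOL-Library.Multiset"
begin

record ('s, 'l) tsys =
  states :: "'s set"
  labels :: "'l set"
  cost   :: "'l \<Rightarrow> real"
  trans  :: "('s \<times> 'l \<times> 's) set"
  init   :: "'s"
  goals  :: "'s set"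

definition wf_tsys :: "('s, 'l) tsys \<Rightarrow> bool" where
  "wf_tsys \<Theta> \<longleftrightarrow> finite (states \<Theta>) \<and> finite (labels \<Theta>)
     \<and> (\<forall>l \<in> labels \<Theta>. cost \<Theta> l \<ge> 0)
     \<and> trans \<Theta> \<subseteq> states \<Theta> \<times> labels \<Theta> \<times> states \<Theta>
     \<and> init \<Theta> \<in> states \<Theta> \<and> goals \<Theta> \<subseteq> states \<Theta>"

record ('i, 's, 'l) info_source =
  info_set    :: "'i set"
  info_init   :: "'i"
  info_update :: "'i \<Rightarrow> ('s \<times> 'l \<times> 's) \<Rightarrow> 'i"
  info_refine :: "'i \<Rightarrow> 's \<Rightarrow> 'i"

definition wf_source :: "('s, 'l) tsys \<Rightarrow> ('i, 's, 'l) info_source \<Rightarrow> bool" where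
  "wf_source \<Theta> \<sigma> \<longleftrightarrow> info_init \<sigma> \<in> info_set \<sigma>
     \<and> (\<forall>\<iota> \<in> info_set \<sigma>. \<forall>t \<in> trans \<Theta>. info_update \<sigma> \<iota> t \<in> info_set \<sigma>)
     \<and> (\<forall>\<iota> \<in> info_set \<sigma>. \<forall>s \<in> states \<Theta>. info_refine \<sigma> \<iota> s \<in> info_set \<sigma>)"

text \<open>Reachable information: pairs (information, set of states that may be refined /
  may be origins of updates, i.e. s_I and targets of earlier updated transitions).\<close>

inductive reach_info :: "('s, 'l) tsys \<Rightarrow> ('i, 's, 'l) info_source \<Rightarrow> 'i \<Rightarrow> 's set \<Rightarrow> bool"
  for \<Theta> \<sigma> where
  start: "reach_info \<Theta> \<sigma> (info_init \<sigma>) {init \<Theta>}"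
| refine: "reach_info \<Theta> \<sigma> \<iota> K \<Longrightarrow> s \<in> K \<Longrightarrow> reach_info \<Theta> \<sigma> (info_refine \<sigma> \<iota> s) K"
| update: "reach_info \<Theta> \<sigma> \<iota> K \<Longrightarrow> (s, l, s') \<in> trans \<Theta> \<Longrightarrow> s \<in> K \<Longrightarrow>
           reach_info \<Theta> \<sigma> (info_update \<sigma> \<iota> (s, l, s')) (insert s' K)"

definition reachable_info :: "('s, 'l) tsys \<Rightarrow> ('i, 's, 'l) info_source \<Rightarrow> 'i \<Rightarrow> bool" where
  "reachable_info \<Theta> \<sigma> \<iota> \<longleftrightarrow> (\<exists>K. reach_info \<Theta> \<sigma> \<iota> K)"

definition dyn_heuristic :: "('s, 'l) tsys \<Rightarrow> ('i, 's, 'l) info_source \<Rightarrow> ('s \<Rightarrow> 'i \<Rightarrow> ereal) \<Rightarrow> bool" where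
  "dyn_heuristic \<Theta> \<sigma> h \<longleftrightarrow> (\<forall>s \<in> states \<Theta>. \<forall>\<iota> \<in> info_set \<sigma>. 0 \<le> h s \<iota>)"

definition dyn_consistent :: "('s, 'l) tsys \<Rightarrow> ('i, 's, 'l) info_source \<Rightarrow> ('s \<Rightarrow> 'i \<Rightarrow> ereal) \<Rightarrow> bool" where
  "dyn_consistent \<Theta> \<sigma> h \<longleftrightarrow>
     (\<forall>s l s' \<iota>. (s, l, s') \<in> trans \<Theta> \<longrightarrow> reachable_info \<Theta> \<sigma> \<iota> \<longrightarrow>
        h s \<iota> \<le> ereal (cost \<Theta> l) + h s' \<iota>)"

definition dyn_monotonic :: "('s, 'l) tsys \<Rightarrow> ('i, 's, 'l) info_source \<Rightarrow> ('s \<Rightarrow> 'i \<Rightarrow> ereal) \<Rightarrow> bool" where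
  "dyn_monotonic \<Theta> \<sigma> h \<longleftrightarrow>
     (\<forall>\<iota> s. reachable_info \<Theta> \<sigma> \<iota> \<longrightarrow> s \<in> states \<Theta> \<longrightarrow>
        (\<forall>t \<in> trans \<Theta>. h s \<iota> \<le> h s (info_update \<sigma> \<iota> t)) \<and>
        (\<forall>s' \<in> states \<Theta>. h s \<iota> \<le> h s (info_refine \<sigma> \<iota> s')))"

type_synonym ('s, 'l) pinfo = "'s \<rightharpoonup> real \<times> ('s \<times> 'l \<times> 's) option"
  \<comment> \<open>None in the second component encodes \<bottom>\<close>

definition parent_update :: "('s, 'l) tsys \<Rightarrow> ('s, 'l) pinfo \<Rightarrow> ('s \<times> 'l \<times> 's) \<Rightarrow> ('s, 'l) pinfo" where
  "parent_update \<Theta> \<iota> t = (case t of (s, l, s') \<Rightarrow>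
     (case \<iota> s of
        None \<Rightarrow> \<iota>
      | Some (g, _) \<Rightarrow>
          (if \<iota> s' = None \<or> fst (the (\<iota> s')) \<ge> g + cost \<Theta> l
           then \<iota>(s' \<mapsto> (g + cost \<Theta> l, Some (s, l, s'))) else \<iota>)))"

definition parent_source :: "('s, 'l) tsys \<Rightarrow> (('s, 'l) pinfo, 's, 'l) info_source" where
  "parent_source \<Theta> =
     \<lparr> info_set = {\<iota>. dom \<iota> \<subseteq> states \<Theta> \<and>
                      (\<forall>g p. (g, p) \<in> ran \<iota> \<longrightarrow> g \<ge> 0 \<and> (\<forall>t. p = Some t \<longrightarrow> t \<in> trans \<Theta>))},
       info_init = [init \<Theta> \<mapsto> (0, None)],
       info_update = parent_update \<Theta>,
       info_refine = (\<lambda>\<iota> s. \<iota>) \<rparr>"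

definition gval :: "('s, 'l) pinfo \<Rightarrow> 's \<Rightarrow> real" where
  "gval \<iota> s = fst (the (\<iota> s))"

text \<open>The field pending holds the outgoing transitions of the
  currently expanded state that have not yet been processed (they are processed one at a time
  in an arbitrary order). halted is set when a goal state is expanded (the algorithm returns).\<close>

record ('s, 'l, 'i) astar_conf =
  cp      :: "('s, 'l) pinfo"
  ch      :: "'i"
  known   :: "'s set"
  closed  :: "'s set"
  opn     :: "('s \<times> real \<times> ereal) multiset"
  pending :: "('s \<times> 'l \<times> 's) set"
  halted  :: bool

definition astar_init ::
  "('s, 'l) tsys \<Rightarrow> ('i, 's, 'l) info_source \<Rightarrow> ('s \<Rightarrow> 'i \<Rightarrow> ereal) \<Rightarrow> ('s, 'l, 'i) astar_conf" where
  "astar_init \<Theta> \<sigma> h =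
    (let \<iota>p = info_init (parent_source \<Theta>); \<iota>h = info_init \<sigma>; sI = init \<Theta> in
     \<lparr> cp = \<iota>p, ch = \<iota>h, known = {sI}, closed = {},
       opn = (if h sI \<iota>h < \<infinity> then {# (sI, gval \<iota>p sI, h sI \<iota>h) #} else {#}),
       pending = {}, halted = False \<rparr>)"

definition process_trans ::
  "('s, 'l) tsys \<Rightarrow> ('i, 's, 'l) info_source \<Rightarrow> ('s \<Rightarrow> 'i \<Rightarrow> ereal) \<Rightarrow>
   ('s \<times> 'l \<times> 's) \<Rightarrow> ('s, 'l, 'i) astar_conf \<Rightarrow> ('s, 'l, 'i) astar_conf" where
  "process_trans \<Theta> \<sigma> h t C =
    (case t of (s, l, s') \<Rightarrow>
      (let old = (if s' \<in> known C then Some (gval (cp C) s') else None);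
           \<iota>p' = info_update (parent_source \<Theta>) (cp C) t;
           \<iota>h' = info_update \<sigma> (ch C) t;
           C1 = C\<lparr> cp := \<iota>p', ch := \<iota>h', known := insert s' (known C),
                  pending := pending C - {t} \<rparr>;
           hv = h s' \<iota>h'
       in if hv = \<infinity> then C1
          else (case old of
                  None \<Rightarrow> C1\<lparr> opn := opn C + {# (s', gval \<iota>p' s', hv) #} \<rparr>
                | Some og \<Rightarrow>
                    (if og > gval \<iota>p' s'
                     then C1\<lparr> closed := closed C - {s'},
                             opn := opn C + {# (s', gval \<iota>p' s', hv) #} \<rparr>
                     else C1))))"

definition pop_entry ::
  "('s, 'l) tsys \<Rightarrow> ('i, 's, 'l) info_source \<Rightarrow> ('s \<Rightarrow> 'i \<Rightarrow> ereal) \<Rightarrow> bool \<Rightarrow>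
   ('s \<times> real \<times> ereal) \<Rightarrow> ('s, 'l, 'i) astar_conf \<Rightarrow> ('s, 'l, 'i) astar_conf" where
  "pop_entry \<Theta> \<sigma> h reeval e C =
    (case e of (s, gh, hh) \<Rightarrow>
      (let O' = opn C - {# e #} in
       if s \<in> closed C then C\<lparr> opn := O' \<rparr>
       else
         (let \<iota>p' = info_refine (parent_source \<Theta>) (cp C) s;
              \<iota>h' = info_refine \<sigma> (ch C) s;
              hs = h s \<iota>h'
          in if reeval \<and> hh < hs
             then C\<lparr> cp := \<iota>p', ch := \<iota>h',
                     opn := (if hs < \<infinity> then O' + {# (s, gval \<iota>p' s, hs) #} else O') \<rparr>
             else
               (let C2 = C\<lparr> cp := \<iota>p', ch := \<iota>h', opn := O', closed := insert s (closed C) \<rparr>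
                in if s \<in> goals \<Theta> then C2\<lparr> halted := True \<rparr>
                   else C2\<lparr> pending := {t \<in> trans \<Theta>. fst t = s} \<rparr>))))"

definition entry_key :: "('s \<times> real \<times> ereal) \<Rightarrow> ereal" where
  "entry_key e = ereal (fst (snd e)) + snd (snd e)"

inductive astar_step ::
  "('s, 'l) tsys \<Rightarrow> ('i, 's, 'l) info_source \<Rightarrow> ('s \<Rightarrow> 'i \<Rightarrow> ereal) \<Rightarrow> bool \<Rightarrow>
   ('s, 'l, 'i) astar_conf \<Rightarrow> ('s, 'l, 'i) astar_conf \<Rightarrow> bool"
  for \<Theta> \<sigma> h reeval where
  succ: "\<not> halted C \<Longrightarrow> t \<in> pending C \<Longrightarrow>
         astar_step \<Theta> \<sigma> h reeval C (process_trans \<Theta> \<sigma> h t C)"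
| pop: "\<not> halted C \<Longrightarrow> pending C = {} \<Longrightarrow> e \<in># opn C \<Longrightarrow>
        (\<forall>e' \<in># opn C. entry_key e \<le> entry_key e') \<Longrightarrow>
        astar_step \<Theta> \<sigma> h reeval C (pop_entry \<Theta> \<sigma> h reeval e C)"

end

theory Submission
  imports Defs
begin

(* Closed states carry optimal g-values: the g-value of a closed state is at most the cost of
   every path from the initial state, whereas every g-value ever assigned is at least the cost of
   some actual path. Hence relaxing an edge never lowers the g-value of a closed state, and no
   state is reopened.

   Optimality is established when a state s is expanded. As no reevaluation fired, h(s) is at
   most the popped h-value. A path of cost c to s either has infinite heuristic value or leaves
   the closed states through an open state v; dyn-consistency along the path and dyn-monotonicity
   give the Open entry of v a key of at most c + h(s), and the minimality of the popped key then
   bounds g(s) by c. *)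

lemma parent_update_other: "w \<noteq> v \<Longrightarrow> parent_update \<Theta> \<iota> (u, l, v) w = \<iota> w"
  by (auto simp: parent_update_def split: option.splits)

lemma dom_parent_update:
  "u \<in> dom \<iota> \<Longrightarrow> dom (parent_update \<Theta> \<iota> (u, l, v)) = insert v (dom \<iota>)"
  by (auto simp: parent_update_def split: option.splits)

lemma gval_parent_update_le:
  "w \<in> dom \<iota> \<Longrightarrow> gval (parent_update \<Theta> \<iota> (u, l, v)) w \<le> gval \<iota> w"
  by (auto simp: parent_update_def gval_def split: option.splits)

lemma gval_parent_update_target_le:
  "u \<in> dom \<iota> \<Longrightarrow> gval (parent_update \<Theta> \<iota> (u, l, v)) v \<le> gval \<iota> u + cost \<Theta> l"
  by (auto simp: parent_update_def gval_def split: option.splits)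

lemma gval_parent_update_target_cases:
  "u \<in> dom \<iota> \<Longrightarrow> gval (parent_update \<Theta> \<iota> (u, l, v)) v = gval \<iota> u + cost \<Theta> l
     \<or> gval (parent_update \<Theta> \<iota> (u, l, v)) v = gval \<iota> v"
  by (auto simp: parent_update_def gval_def split: option.splits)

lemma gval_parent_update_new_target:
  "u \<in> dom \<iota> \<Longrightarrow> v \<notin> dom \<iota> \<Longrightarrow> gval (parent_update \<Theta> \<iota> (u, l, v)) v = gval \<iota> u + cost \<Theta> l"
  by (auto simp: parent_update_def gval_def split: option.splits)

lemma process_trans_simps:
  fixes \<Theta> :: "('s, 'l) tsys" and \<sigma> :: "('i, 's, 'l) info_source" and C :: "('s, 'l, 'i) astar_conf"
    and u v :: 's and l :: 'l
  defines "P' \<equiv> parent_update \<Theta> (cp C) (u, l, v)" and "H' \<equiv> info_update \<sigma> (ch C) (u, l, v)"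
  shows "cp (process_trans \<Theta> \<sigma> h (u, l, v) C) = P'"
    and "ch (process_trans \<Theta> \<sigma> h (u, l, v) C) = H'"
    and "known (process_trans \<Theta> \<sigma> h (u, l, v) C) = insert v (known C)"
    and "pending (process_trans \<Theta> \<sigma> h (u, l, v) C) = pending C - {(u, l, v)}"
    and "halted (process_trans \<Theta> \<sigma> h (u, l, v) C) = halted C"
    and "closed (process_trans \<Theta> \<sigma> h (u, l, v) C) =
      (if h v H' \<noteq> \<infinity> \<and> v \<in> known C \<and> gval P' v < gval (cp C) v then closed C - {v} else closed C)"
    and "opn (process_trans \<Theta> \<sigma> h (u, l, v) C) =
      (if h v H' \<noteq> \<infinity> \<and> (v \<notin> known C \<or> gval P' v < gval (cp C) v)
       then opn C + {#(v, gval P' v, h v H')#} else opn C)"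
  by (auto simp: process_trans_def Let_def parent_source_def assms)

lemma pop_entry_closed:
  "s \<in> closed C \<Longrightarrow> pop_entry \<Theta> \<sigma> h r (s, gh, hh) C = C\<lparr>opn := opn C - {#(s, gh, hh)#}\<rparr>"
  by (simp add: pop_entry_def)

lemma pop_entry_reeval:
  fixes \<sigma> :: "('i, 's, 'l) info_source" and C :: "('s, 'l, 'i) astar_conf" and s :: 's
  defines "H' \<equiv> info_refine \<sigma> (ch C) s"
  assumes "s \<notin> closed C" and "hh < h s H'"
  shows "pop_entry \<Theta> \<sigma> h True (s, gh, hh) C =
    C\<lparr>ch := H', opn := (if h s H' < \<infinity> then opn C - {#(s, gh, hh)#} + {#(s, gval (cp C) s, h s H')#}
                        else opn C - {#(s, gh, hh)#})\<rparr>"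
  using assms by (simp add: pop_entry_def Let_def parent_source_def)

lemma pop_entry_expand:
  fixes \<sigma> :: "('i, 's, 'l) info_source" and C :: "('s, 'l, 'i) astar_conf" and s :: 's
  defines "H' \<equiv> info_refine \<sigma> (ch C) s"
  assumes "s \<notin> closed C" and "\<not> hh < h s H'"
  shows "pop_entry \<Theta> \<sigma> h True (s, gh, hh) C =
    C\<lparr>ch := H', opn := opn C - {#(s, gh, hh)#}, closed := insert s (closed C),
      pending := (if s \<in> goals \<Theta> then pending C else {t \<in> trans \<Theta>. fst t = s}),
      halted := (halted C \<or> s \<in> goals \<Theta>)\<rparr>"
  using assms by (simp add: pop_entry_def Let_def parent_source_def)

inductive path_cost :: "('s, 'l) tsys \<Rightarrow> 's \<Rightarrow> real \<Rightarrow> bool" for \<Theta> where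
  init: "path_cost \<Theta> (init \<Theta>) 0"
| step: "path_cost \<Theta> u c \<Longrightarrow> (u, l, v) \<in> trans \<Theta> \<Longrightarrow> path_cost \<Theta> v (c + cost \<Theta> l)"

locale dyn_astar =
  fixes \<Theta> :: "('s, 'l) tsys" and \<sigma> :: "('i, 's, 'l) info_source" and h :: "'s \<Rightarrow> 'i \<Rightarrow> ereal"
  assumes tsys_wf: "wf_tsys \<Theta>" and source_wf: "wf_source \<Theta> \<sigma>"
    and h_heuristic: "dyn_heuristic \<Theta> \<sigma> h" and h_monotonic: "dyn_monotonic \<Theta> \<sigma> h"
    and h_consistent: "dyn_consistent \<Theta> \<sigma> h"
begin

lemma trans_states_cost: "(u, l, v) \<in> trans \<Theta> \<Longrightarrow> u \<in> states \<Theta> \<and> v \<in> states \<Theta> \<and> 0 \<le> cost \<Theta> l"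
  using tsys_wf unfolding wf_tsys_def by blast

lemma h_le_update:
  "reach_info \<Theta> \<sigma> \<iota> K \<Longrightarrow> s \<in> states \<Theta> \<Longrightarrow> t \<in> trans \<Theta> \<Longrightarrow> h s \<iota> \<le> h s (info_update \<sigma> \<iota> t)"
  using h_monotonic unfolding dyn_monotonic_def reachable_info_def by blast

lemma h_le_refine:
  "reach_info \<Theta> \<sigma> \<iota> K \<Longrightarrow> s \<in> states \<Theta> \<Longrightarrow> s' \<in> states \<Theta> \<Longrightarrow> h s \<iota> \<le> h s (info_refine \<sigma> \<iota> s')"
  using h_monotonic unfolding dyn_monotonic_def reachable_info_def by blast

lemma h_le_cost_plus:
  "reach_info \<Theta> \<sigma> \<iota> K \<Longrightarrow> (s, l, s') \<in> trans \<Theta> \<Longrightarrow> h s \<iota> \<le> ereal (cost \<Theta> l) + h s' \<iota>"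
  using h_consistent unfolding dyn_consistent_def reachable_info_def by blast

lemma h_nonneg: "s \<in> states \<Theta> \<Longrightarrow> \<iota> \<in> info_set \<sigma> \<Longrightarrow> 0 \<le> h s \<iota>"
  using h_heuristic unfolding dyn_heuristic_def by blast

definition astar_wf :: "('s, 'l, 'i) astar_conf \<Rightarrow> bool" where
  "astar_wf C \<longleftrightarrow> known C \<subseteq> states \<Theta> \<and> dom (cp C) = known C \<and> init \<Theta> \<in> known C
     \<and> closed C \<subseteq> known C \<and> reach_info \<Theta> \<sigma> (ch C) (known C) \<and> ch C \<in> info_set \<sigma>
     \<and> pending C \<subseteq> trans \<Theta> \<and> fst ` pending C \<subseteq> known C"

definition open_sound :: "('s, 'l, 'i) astar_conf \<Rightarrow> bool" where
  "open_sound C \<longleftrightarrow> (\<forall>(s, g, hs) \<in># opn C. s \<in> known C \<and> gval (cp C) s \<le> g \<and> hs < \<infinity>)"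

definition open_covers :: "('s, 'l, 'i) astar_conf \<Rightarrow> bool" where
  "open_covers C \<longleftrightarrow> (\<forall>v \<in> known C - closed C. h v (ch C) < \<infinity> \<longrightarrow>
     (\<exists>e \<in># opn C. fst e = v \<and> entry_key e \<le> ereal (gval (cp C) v) + h v (ch C)))"

(* An expanded goal state gets closed without its edges being relaxed; the run halts there. *)
definition closed_relaxed :: "('s, 'l, 'i) astar_conf \<Rightarrow> bool" where
  "closed_relaxed C \<longleftrightarrow> halted C \<or> (\<forall>u \<in> closed C. \<forall>l v. (u, l, v) \<in> trans \<Theta> - pending C \<longrightarrow>
     v \<in> known C \<and> gval (cp C) v \<le> gval (cp C) u + cost \<Theta> l)"

definition closed_optimal :: "('s, 'l, 'i) astar_conf \<Rightarrow> bool" where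
  "closed_optimal C \<longleftrightarrow> (\<forall>u \<in> closed C. \<forall>c. path_cost \<Theta> u c \<longrightarrow> gval (cp C) u \<le> c)"

definition g_realizable :: "('s, 'l, 'i) astar_conf \<Rightarrow> bool" where
  "g_realizable C \<longleftrightarrow> gval (cp C) (init \<Theta>) \<le> 0
     \<and> (\<forall>u \<in> known C. \<exists>c. path_cost \<Theta> u c \<and> c \<le> gval (cp C) u)"

definition astar_inv :: "('s, 'l, 'i) astar_conf \<Rightarrow> bool" where
  "astar_inv C \<longleftrightarrow> astar_wf C \<and> open_sound C \<and> open_covers C \<and> closed_relaxed C
     \<and> closed_optimal C \<and> g_realizable C"

lemma astar_inv_init: "astar_inv (astar_init \<Theta> \<sigma> h)"
  using tsys_wf source_wf
  by (auto simp: astar_inv_def astar_wf_def open_sound_def open_covers_def closed_relaxed_def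
      closed_optimal_def g_realizable_def astar_init_def Let_def parent_source_def gval_def
      entry_key_def wf_tsys_def wf_source_def intro: reach_info.start path_cost.init)

context
  fixes C C' :: "('s, 'l, 'i) astar_conf" and u v :: 's and l :: 'l
  assumes inv: "astar_inv C" and edge_pending: "(u, l, v) \<in> pending C"
    and C': "C' = process_trans \<Theta> \<sigma> h (u, l, v) C"
begin

lemma edge_facts: "(u, l, v) \<in> trans \<Theta>" "u \<in> known C" "u \<in> dom (cp C)"
  using inv edge_pending by (auto simp: astar_inv_def astar_wf_def)

lemma gval_process_trans_le: "w \<in> known C \<Longrightarrow> gval (cp C') w \<le> gval (cp C) w"
  using inv by (simp add: C' process_trans_simps gval_parent_update_le astar_inv_def astar_wf_def)

lemma gval_process_trans_other: "w \<noteq> v \<Longrightarrow> gval (cp C') w = gval (cp C) w"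
  by (simp add: C' process_trans_simps gval_def parent_update_other)

lemma h_process_trans_mono: "w \<in> states \<Theta> \<Longrightarrow> h w (ch C) \<le> h w (ch C')"
  using inv h_le_update[OF _ _ edge_facts(1)]
  by (auto simp: C' process_trans_simps astar_inv_def astar_wf_def)

lemma gval_process_trans_closed:
  assumes "w \<in> closed C"
  shows "gval (cp C') w = gval (cp C) w"
proof (cases "w = v")
  case True
  obtain c where c: "path_cost \<Theta> u c" "c \<le> gval (cp C) u"
    using inv edge_facts(2) by (auto simp: astar_inv_def g_realizable_def)
  have "gval (cp C) v \<le> c + cost \<Theta> l"
    using inv assms True path_cost.step[OF c(1) edge_facts(1)] by (auto simp: astar_inv_def closed_optimal_def)
  then have "gval (cp C) v \<le> gval (cp C') v"
    using c(2) gval_parent_update_target_cases[OF edge_facts(3), of \<Theta> l v] by (auto simp: C' process_trans_simps)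
  moreover have "w \<in> known C"
    using inv assms by (auto simp: astar_inv_def astar_wf_def)
  ultimately show ?thesis
    using gval_process_trans_le True by fastforce
qed (rule gval_process_trans_other)

lemma closed_process_trans: "closed C' = closed C"
  using gval_process_trans_closed[of v] by (auto simp: C' process_trans_simps)

lemma astar_wf_process_trans: "astar_wf C'"
  using inv edge_facts edge_pending trans_states_cost[OF edge_facts(1)] source_wf
  by (auto simp: C' process_trans_simps astar_inv_def astar_wf_def dom_parent_update wf_source_def
      intro: reach_info.update)

lemma open_sound_process_trans: "open_sound C'"
  using inv gval_process_trans_le
  by (fastforce simp: C' process_trans_simps astar_inv_def open_sound_def top.not_eq_extremum)

lemma open_covers_process_trans: "open_covers C'"
  unfolding open_covers_def
proof (intro ballI impI)
  fix w assume w: "w \<in> known C' - closed C'" and hw: "h w (ch C') < \<infinity>"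
  show "\<exists>e \<in># opn C'. fst e = w \<and> entry_key e \<le> ereal (gval (cp C') w) + h w (ch C')"
  proof (cases "w = v \<and> (v \<notin> known C \<or> gval (cp C') v < gval (cp C) v)")
    case True
    then show ?thesis using hw by (auto simp: C' process_trans_simps entry_key_def)
  next
    case False
    have wk: "w \<in> known C" using False w by (auto simp: C' process_trans_simps)
    have gw: "gval (cp C') w = gval (cp C) w"
      using False gval_process_trans_le[OF wk] gval_process_trans_other[of w] by (cases "w = v") auto
    have ws: "w \<in> states \<Theta>" using wk inv by (auto simp: astar_inv_def astar_wf_def)
    have "h w (ch C) < \<infinity>" using hw h_process_trans_mono[OF ws] by (meson le_less_trans)
    then obtain e where "e \<in># opn C" "fst e = w" "entry_key e \<le> ereal (gval (cp C) w) + h w (ch C)"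
      using inv wk w closed_process_trans by (auto simp: astar_inv_def open_covers_def)
    moreover have "ereal (gval (cp C) w) + h w (ch C) \<le> ereal (gval (cp C') w) + h w (ch C')"
      using gw h_process_trans_mono[OF ws] by (simp add: add_left_mono)
    moreover have "opn C \<subseteq># opn C'" by (simp add: C' process_trans_simps)
    ultimately show ?thesis by (blast dest: mset_subset_eqD intro: order_trans)
  qed
qed

lemma closed_relaxed_process_trans: "closed_relaxed C'"
proof (cases "halted C")
  case True
  then show ?thesis by (simp add: closed_relaxed_def C' process_trans_simps)
next
  case False
  have relaxed: "v' \<in> known C \<and> gval (cp C) v' \<le> gval (cp C) u' + cost \<Theta> l'"
    if "u' \<in> closed C" "(u', l', v') \<in> trans \<Theta> - pending C" for u' l' v'
    using inv False that by (auto simp: astar_inv_def closed_relaxed_def)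
  have "v' \<in> known C' \<and> gval (cp C') v' \<le> gval (cp C') u' + cost \<Theta> l'"
    if u': "u' \<in> closed C" and e: "(u', l', v') \<in> trans \<Theta> - pending C'" for u' l' v'
  proof (cases "(u', l', v') = (u, l, v)")
    case True
    then show ?thesis
      using gval_process_trans_closed[OF u'] gval_parent_update_target_le[OF edge_facts(3)]
      by (auto simp: C' process_trans_simps)
  next
    case False
    then have "v' \<in> known C" "gval (cp C) v' \<le> gval (cp C) u' + cost \<Theta> l'"
      using relaxed u' e by (auto simp: C' process_trans_simps)
    then show ?thesis
      using gval_process_trans_le[of v'] gval_process_trans_closed[OF u'] by (auto simp: C' process_trans_simps)
  qed
  then show ?thesis by (auto simp: closed_relaxed_def closed_process_trans)
qed

lemma closed_optimal_process_trans: "closed_optimal C'"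
  using inv gval_process_trans_closed by (auto simp: closed_optimal_def astar_inv_def closed_process_trans)

lemma g_realizable_process_trans: "g_realizable C'"
proof -
  have init_known: "init \<Theta> \<in> known C" using inv by (simp add: astar_inv_def astar_wf_def)
  obtain c where c: "path_cost \<Theta> u c" "c \<le> gval (cp C) u"
    using inv edge_facts(2) by (auto simp: astar_inv_def g_realizable_def)
  have via_u: "path_cost \<Theta> v (c + cost \<Theta> l)" using c(1) edge_facts(1) by (rule path_cost.step)
  have "\<exists>c. path_cost \<Theta> w c \<and> c \<le> gval (cp C') w" if w: "w \<in> known C'" for w
  proof (cases "w = v")
    case True
    have "gval (cp C') v = gval (cp C) u + cost \<Theta> l \<or> v \<in> known C \<and> gval (cp C') v = gval (cp C) v"
      using inv gval_parent_update_target_cases[OF edge_facts(3), of \<Theta> l v]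
        gval_parent_update_new_target[OF edge_facts(3), of v \<Theta> l]
      by (auto simp: C' process_trans_simps astar_inv_def astar_wf_def)
    then show ?thesis
      using True via_u c(2) inv by (auto simp: astar_inv_def g_realizable_def)
  next
    case False
    then show ?thesis
      using inv w gval_process_trans_other[OF False] by (auto simp: C' process_trans_simps astar_inv_def g_realizable_def)
  qed
  moreover have "gval (cp C') (init \<Theta>) \<le> 0"
    using inv gval_process_trans_le[OF init_known] by (auto simp: astar_inv_def g_realizable_def)
  ultimately show ?thesis by (simp add: g_realizable_def)
qed

lemma astar_inv_process_trans: "astar_inv C'"
  using astar_wf_process_trans open_sound_process_trans open_covers_process_trans
    closed_relaxed_process_trans closed_optimal_process_trans g_realizable_process_trans
  by (simp add: astar_inv_def)

end

lemma frontier_bound: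
  assumes inv: "astar_inv C" and running: "\<not> halted C" and no_pending: "pending C = {}"
    and reach: "reach_info \<Theta> \<sigma> \<iota> K" and path: "path_cost \<Theta> w c"
  shows "h w \<iota> = \<infinity> \<or> w \<in> closed C
    \<or> (\<exists>v \<in> known C - closed C. ereal (gval (cp C) v) + h v \<iota> \<le> ereal c + h w \<iota>)"
  using path
proof (induction rule: path_cost.induct)
  case init
  have "init \<Theta> \<in> known C" and "gval (cp C) (init \<Theta>) \<le> 0"
    using inv by (auto simp: astar_inv_def astar_wf_def g_realizable_def)
  moreover from this(2) have "ereal (gval (cp C) (init \<Theta>)) + h (init \<Theta>) \<iota> \<le> ereal 0 + h (init \<Theta>) \<iota>"
    by (intro add_right_mono) simp
  ultimately show ?case by blast
next
  case (step u c l v)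
  have cons: "h u \<iota> \<le> ereal (cost \<Theta> l) + h v \<iota>" using reach step.hyps(2) by (rule h_le_cost_plus)
  show ?case
  proof (cases "h v \<iota> = \<infinity> \<or> v \<in> closed C")
    case False
    then have v_open: "v \<notin> closed C" and "h v \<iota> \<noteq> \<infinity>" by auto
    then have "h u \<iota> \<noteq> \<infinity>" using cons by auto
    with step.IH consider (closed) "u \<in> closed C"
      | (frontier) v' where "v' \<in> known C - closed C" "ereal (gval (cp C) v') + h v' \<iota> \<le> ereal c + h u \<iota>"
      by blast
    then show ?thesis
    proof cases
      case closed
      have "gval (cp C) u \<le> c"
        using inv closed step.hyps(1) by (auto simp: astar_inv_def closed_optimal_def)
      moreover have "v \<in> known C" "gval (cp C) v \<le> gval (cp C) u + cost \<Theta> l"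
        using inv running no_pending closed step.hyps(2) by (auto simp: astar_inv_def closed_relaxed_def)
      ultimately have "v \<in> known C - closed C"
        "ereal (gval (cp C) v) + h v \<iota> \<le> ereal (c + cost \<Theta> l) + h v \<iota>"
        using v_open by (auto intro!: add_right_mono)
      then show ?thesis by blast
    next
      case frontier
      have "ereal c + h u \<iota> \<le> ereal (c + cost \<Theta> l) + h v \<iota>"
        using add_left_mono[OF cons, of "ereal c"] by (simp add: add.assoc[symmetric])
      then show ?thesis using frontier by (blast intro: order_trans)
    qed
  qed blast
qed

context
  fixes C :: "('s, 'l, 'i) astar_conf" and s :: 's and gh :: real and hh :: ereal
  assumes inv: "astar_inv C" and running: "\<not> halted C" and no_pending: "pending C = {}"
    and popped: "(s, gh, hh) \<in># opn C"
    and popped_min: "\<forall>e \<in># opn C. entry_key (s, gh, hh) \<le> entry_key e"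
    and s_open: "s \<notin> closed C"
begin

lemma popped_facts: "s \<in> known C" "s \<in> states \<Theta>" "gval (cp C) s \<le> gh" "hh < \<infinity>"
  using inv popped by (auto simp: astar_inv_def astar_wf_def open_sound_def)

lemma reach_info_refine_popped: "reach_info \<Theta> \<sigma> (info_refine \<sigma> (ch C) s) (known C)"
  using inv popped_facts(1) by (auto simp: astar_inv_def astar_wf_def intro: reach_info.refine)

lemma refine_popped_info_set: "info_refine \<sigma> (ch C) s \<in> info_set \<sigma>"
  using inv source_wf popped_facts(2) by (auto simp: astar_inv_def astar_wf_def wf_source_def)

lemma h_refine_popped_mono: "w \<in> states \<Theta> \<Longrightarrow> h w (ch C) \<le> h w (info_refine \<sigma> (ch C) s)"
  using inv popped_facts(2) h_le_refine by (auto simp: astar_inv_def astar_wf_def)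

lemma open_covers_refine_popped:
  assumes w: "w \<in> known C - closed C" "w \<noteq> s" and hw: "h w (info_refine \<sigma> (ch C) s) < \<infinity>"
  shows "\<exists>e \<in># opn C - {#(s, gh, hh)#}. fst e = w
    \<and> entry_key e \<le> ereal (gval (cp C) w) + h w (info_refine \<sigma> (ch C) s)"
proof -
  have ws: "w \<in> states \<Theta>" using w inv by (auto simp: astar_inv_def astar_wf_def)
  have "h w (ch C) < \<infinity>" using hw h_refine_popped_mono[OF ws] by (meson le_less_trans)
  then obtain e where e: "e \<in># opn C" "fst e = w" "entry_key e \<le> ereal (gval (cp C) w) + h w (ch C)"
    using inv w by (auto simp: astar_inv_def open_covers_def)
  have "e \<in># opn C - {#(s, gh, hh)#}" using e(1,2) w(2) by (auto simp: in_diff_count)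
  moreover have "entry_key e \<le> ereal (gval (cp C) w) + h w (info_refine \<sigma> (ch C) s)"
    using e(3) h_refine_popped_mono[OF ws] by (meson add_left_mono order_trans)
  ultimately show ?thesis using e(2) by blast
qed

lemma gval_popped_optimal:
  assumes no_reeval: "\<not> hh < h s (info_refine \<sigma> (ch C) s)" and path: "path_cost \<Theta> s c"
  shows "gval (cp C) s \<le> c"
proof -
  let ?H' = "info_refine \<sigma> (ch C) s"
  let ?hs = "h s ?H'"
  have hs_le: "?hs \<le> hh" using no_reeval by simp
  have hs_fin: "?hs \<noteq> \<infinity>" using hs_le popped_facts(4) by auto
  have hs_nonneg: "0 \<le> ?hs" using h_nonneg[OF popped_facts(2) refine_popped_info_set] .
  obtain v where v: "v \<in> known C - closed C" "ereal (gval (cp C) v) + h v ?H' \<le> ereal c + ?hs"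
    using frontier_bound[OF inv running no_pending reach_info_refine_popped path] hs_fin s_open by blast
  have vs: "v \<in> states \<Theta>" using v(1) inv by (auto simp: astar_inv_def astar_wf_def)
  have "h v ?H' < \<infinity>" using v(2) hs_fin by (cases "h v ?H'"; cases ?hs) auto
  then have "h v (ch C) < \<infinity>" using h_refine_popped_mono[OF vs] by (meson le_less_trans)
  then obtain e where e: "e \<in># opn C" "entry_key e \<le> ereal (gval (cp C) v) + h v (ch C)"
    using inv v(1) by (auto simp: astar_inv_def open_covers_def)
  have "ereal gh + ?hs \<le> ereal gh + hh" using hs_le by (rule add_left_mono)
  also have "\<dots> = entry_key (s, gh, hh)" by (simp add: entry_key_def)
  also have "\<dots> \<le> entry_key e" using popped_min e(1) by blast
  also have "\<dots> \<le> ereal (gval (cp C) v) + h v ?H'"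
    using e(2) h_refine_popped_mono[OF vs] by (meson add_left_mono order_trans)
  also have "\<dots> \<le> ereal c + ?hs" by (rule v(2))
  finally have "gh \<le> c" using hs_fin hs_nonneg by (cases ?hs) auto
  then show ?thesis using popped_facts(3) by linarith
qed

lemma astar_inv_pop_reeval:
  assumes reeval: "hh < h s (info_refine \<sigma> (ch C) s)"
  shows "astar_inv (pop_entry \<Theta> \<sigma> h True (s, gh, hh) C)"
proof -
  let ?H' = "info_refine \<sigma> (ch C) s"
  let ?C' = "pop_entry \<Theta> \<sigma> h True (s, gh, hh) C"
  have C': "?C' = C\<lparr>ch := ?H', opn := (if h s ?H' < \<infinity>
      then opn C - {#(s, gh, hh)#} + {#(s, gval (cp C) s, h s ?H')#} else opn C - {#(s, gh, hh)#})\<rparr>"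
    using s_open reeval by (rule pop_entry_reeval)
  have "astar_wf ?C'"
    using inv reach_info_refine_popped refine_popped_info_set by (simp add: C' astar_inv_def astar_wf_def)
  moreover have "open_sound ?C'"
    using inv popped_facts(1) by (auto simp: C' astar_inv_def open_sound_def dest: in_diffD)
  moreover have "open_covers ?C'"
    using open_covers_refine_popped by (fastforce simp: C' open_covers_def entry_key_def)
  moreover have "closed_relaxed ?C'" "closed_optimal ?C'" "g_realizable ?C'"
    using inv by (simp_all add: C' astar_inv_def closed_relaxed_def closed_optimal_def g_realizable_def)
  ultimately show ?thesis by (simp add: astar_inv_def)
qed

lemma astar_inv_pop_expand:
  assumes no_reeval: "\<not> hh < h s (info_refine \<sigma> (ch C) s)"
  shows "astar_inv (pop_entry \<Theta> \<sigma> h True (s, gh, hh) C)"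
proof -
  let ?C' = "pop_entry \<Theta> \<sigma> h True (s, gh, hh) C"
  have C': "?C' = C\<lparr>ch := info_refine \<sigma> (ch C) s, opn := opn C - {#(s, gh, hh)#},
      closed := insert s (closed C), pending := (if s \<in> goals \<Theta> then pending C else {t \<in> trans \<Theta>. fst t = s}),
      halted := (halted C \<or> s \<in> goals \<Theta>)\<rparr>"
    using s_open no_reeval by (rule pop_entry_expand)
  have "astar_wf ?C'"
    using inv reach_info_refine_popped refine_popped_info_set popped_facts(1)
    by (auto simp: C' astar_inv_def astar_wf_def)
  moreover have "open_sound ?C'"
    using inv by (auto simp: C' astar_inv_def open_sound_def dest: in_diffD)
  moreover have "open_covers ?C'"
    using open_covers_refine_popped by (simp add: C' open_covers_def)
  moreover have "closed_relaxed ?C'"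
    using inv running no_pending by (auto simp: C' astar_inv_def closed_relaxed_def)
  moreover have "closed_optimal ?C'"
    using inv gval_popped_optimal[OF no_reeval] by (auto simp: C' astar_inv_def closed_optimal_def)
  moreover have "g_realizable ?C'"
    using inv by (simp add: C' astar_inv_def g_realizable_def)
  ultimately show ?thesis by (simp add: astar_inv_def)
qed

end

lemma astar_inv_pop_closed:
  assumes inv: "astar_inv C" and s_closed: "s \<in> closed C"
  shows "astar_inv (pop_entry \<Theta> \<sigma> h r (s, gh, hh) C)"
proof -
  have "open_covers (C\<lparr>opn := opn C - {#(s, gh, hh)#}\<rparr>)"
    using inv s_closed by (fastforce simp: astar_inv_def open_covers_def in_diff_count)
  then show ?thesis
    using inv by (auto simp: pop_entry_closed[OF s_closed] astar_inv_def astar_wf_def open_sound_def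
        closed_relaxed_def closed_optimal_def g_realizable_def dest: in_diffD)
qed

lemma astar_inv_step:
  assumes inv: "astar_inv C" and step: "astar_step \<Theta> \<sigma> h True C C'"
  shows "astar_inv C'"
  using step
proof cases
  case (succ t)
  then show ?thesis
    using astar_inv_process_trans[OF inv] by (cases t) blast
next
  case (pop e)
  obtain s gh hh where e: "e = (s, gh, hh)" by (cases e)
  consider "s \<in> closed C" | "s \<notin> closed C" "hh < h s (info_refine \<sigma> (ch C) s)"
    | "s \<notin> closed C" "\<not> hh < h s (info_refine \<sigma> (ch C) s)"
    by blast
  then show ?thesis
    using pop e astar_inv_pop_closed[OF inv] astar_inv_pop_reeval[OF inv] astar_inv_pop_expand[OF inv]
    by cases simp_all
qed

lemma astar_inv_reachable:
  "(astar_step \<Theta> \<sigma> h True)\<^sup>*\<^sup>* (astar_init \<Theta> \<sigma> h) C \<Longrightarrow> astar_inv C"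
  by (induction rule: rtranclp_induct) (use astar_inv_init astar_inv_step in blast)+

lemma closed_astar_step:
  assumes inv: "astar_inv C" and step: "astar_step \<Theta> \<sigma> h True C C'"
  shows "closed C \<subseteq> closed C'"
  using step
proof cases
  case (succ t)
  then show ?thesis
    using closed_process_trans[OF inv] by (cases t) fastforce
next
  case (pop e)
  obtain s gh hh where e: "e = (s, gh, hh)" by (cases e)
  then show ?thesis
    using pop by (cases "s \<in> closed C") (auto simp: pop_entry_closed pop_entry_def Let_def)
qed

end

theorem theorem7:
  fixes \<Theta> :: "('s, 'l) tsys"
    and \<sigma> :: "('i, 's, 'l) info_source"
    and h :: "'s \<Rightarrow> 'i \<Rightarrow> ereal"
  assumes "wf_tsys \<Theta>"
    and "wf_source \<Theta> \<sigma>"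
    and "dyn_heuristic \<Theta> \<sigma> h"
    and "dyn_monotonic \<Theta> \<sigma> h"
    and "dyn_consistent \<Theta> \<sigma> h"
    and "(astar_step \<Theta> \<sigma> h True)\<^sup>*\<^sup>* (astar_init \<Theta> \<sigma> h) C"
    and "astar_step \<Theta> \<sigma> h True C C'"
  shows "closed C \<subseteq> closed C'"
proof -
  interpret dyn_astar \<Theta> \<sigma> h
    using assms(1-5) by unfold_locales
  show ?thesis
    using astar_inv_reachable[OF assms(6)] assms(7) by (rule closed_astar_step)
qed

end
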